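(* Under the assumptions of the previous lemma (semi-simple $\tau$, one-point cycles $x_a,x_b$ of $f_\tau(x)=\lambda$), $$\big(I^{(0)}_a(\tau,\lambda),I^{(0)}_b(\tau,\lambda)\big)=\begin{cases}-\partial_\lambda\log(x_a-x_b),&a\ne b,\\ \partial_\lambda\log\big(f'_\tau(x_a)\big),&a=b.\end{cases}$$
   Context: Setup: fix integers $k,m\ge1$, $N=k+m$, $Q\in\mathbb{C}^*$. $M$ is the space of Laurent polynomials $f_t(x)=x^k+\sum_{i=1}^kt_ix^{k-i}+\sum_{j=1}^{m-1}t_{k+j}(Qe^{t_N}/x)^j+(Qe^{t_N}/x)^m$, $\omega=dx/x$, flat coordinates $\tau_1,\dots,\tau_N$ ($\tau_i=-\frac ki\mathrm{Res}_{x=\infty}f^{i/k}\omega$ for $1\le i\le k-1$, $\tau_{k+m-j}=\frac mj\mathrm{Res}_{x=0}f^{j/m}\omega$ for $1\le j\le m-1$, $\tau_k=t_k$, $\tau_N=mt_N$), $\partial_i=\partial/\partial\tau_i$, $f_\tau$ the corresponding Laurent polynomial, residue pairing $(\partial,\partial')=-(\mathrm{Res}_{x=0}+\mathrm{Res}_{x=\infty})\frac{(\partial f\omega)(\partial'f\omega)}{df}$ (identifying vectors and covectors). $\tau$ is semi-simple if $f_\tau$ has $N$ non-degenerate critical points whose critical values form local coordinates near $\tau$. A one-point cycle $x_a(\tau,\lambda)$ is a solution of $f_\tau(x)=\lambda$ varying analytically, and $(I^{(0)}_a(\tau,\lambda),\partial_i)=-\partial_i\log x_a(\tau,\lambda)$;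 $'$ denotes $\partial/\partial x$. *)

theory Defs
  imports "HOL-Complex_Analysis.Complex_Analysis"
begin

text \<open>Points of C^N are represented as functions nat => complex; only the
coordinates 1..N are relevant.\<close>

definition fL :: "nat \<Rightarrow> nat \<Rightarrow> complex \<Rightarrow> (nat \<Rightarrow> complex) \<Rightarrow> complex \<Rightarrow> complex" where
  "fL k m Q t x =
     x ^ k + (\<Sum>i = 1..k. t i * x ^ (k - i))
     + (\<Sum>j = 1..m - 1. t (k + j) * (Q * exp (t (k + m)) / x) ^ j)
     + (Q * exp (t (k + m)) / x) ^ m"

definition res_inf :: "(complex \<Rightarrow> complex) \<Rightarrow> complex" where
  "res_inf g = - residue (\<lambda>w. g (1 / w) / w ^ 2) 0"

text \<open>Flat coordinates tau_n(t), n = 1..k+m.  Branches: f^(1/k) = x (f/x^k)^(1/k)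
near infinity and f^(1/m) = (q/x) (f x^m / q^m)^(1/m) near 0 (q = Q e^(t_N)),
principal powers.\<close>
definition flat :: "nat \<Rightarrow> nat \<Rightarrow> complex \<Rightarrow> (nat \<Rightarrow> complex) \<Rightarrow> nat \<Rightarrow> complex" where
  "flat k m Q t n =
    (if 1 \<le> n \<and> n \<le> k - 1 then
       - (of_nat k / of_nat n) *
         res_inf (\<lambda>x. x ^ n * (fL k m Q t x / x ^ k) powr (of_nat n / of_nat k) / x)
     else if n = k then t k
     else if k + 1 \<le> n \<and> n \<le> k + m - 1 then
       (let j = k + m - n; q = Q * exp (t (k + m)) in
        (of_nat m / of_nat j) *
          residue (\<lambda>x. (q / x) ^ j * (fL k m Q t x * x ^ m / q ^ m) powr (of_nat j / of_nat m) / x) 0)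
     else if n = k + m then of_nat m * t (k + m)
     else 0)"

definition polydisc :: "nat \<Rightarrow> (nat \<Rightarrow> complex) \<Rightarrow> real \<Rightarrow> (nat \<Rightarrow> complex) set" where
  "polydisc N c r = {z. \<forall>i\<in>{1..N}. cmod (z i - c i) < r}"

definition pd :: "nat \<Rightarrow> ((nat \<Rightarrow> complex) \<Rightarrow> complex) \<Rightarrow> (nat \<Rightarrow> complex) \<Rightarrow> complex" where
  "pd i G z = deriv (\<lambda>w. G (z(i := w))) (z i)"

text \<open>Holomorphic functions of N variables on a polydisc (Osgood: continuous and
holomorphic in each variable separately).\<close>
definition holo :: "nat \<Rightarrow> (nat \<Rightarrow> complex) set \<Rightarrow> ((nat \<Rightarrow> complex) \<Rightarrow> complex) \<Rightarrow> bool" where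
  "holo N U G \<longleftrightarrow>
     (\<forall>z\<in>U. \<forall>i\<in>{1..N}. (\<lambda>w. G (z(i := w))) field_differentiable at (z i)) \<and>
     (\<forall>z\<in>U. \<forall>e>0. \<exists>d>0. \<forall>z'\<in>U. (\<forall>i\<in>{1..N}. cmod (z' i - z i) < d) \<longrightarrow> cmod (G z' - G z) < e)"

definition holo2 :: "nat \<Rightarrow> (nat \<Rightarrow> complex) set \<Rightarrow> complex set \<Rightarrow>
    ((nat \<Rightarrow> complex) \<Rightarrow> complex \<Rightarrow> complex) \<Rightarrow> bool" where
  "holo2 N U L G \<longleftrightarrow>
     (\<forall>z\<in>U. \<forall>l\<in>L. \<forall>i\<in>{1..N}. (\<lambda>w. G (z(i := w)) l) field_differentiable at (z i)) \<and>
     (\<forall>z\<in>U. \<forall>l\<in>L. G z field_differentiable at l) \<and>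
     (\<forall>z\<in>U. \<forall>l\<in>L. \<forall>e>0. \<exists>d>0. \<forall>z'\<in>U. \<forall>l'\<in>L.
        (\<forall>i\<in>{1..N}. cmod (z' i - z i) < d) \<and> cmod (l' - l) < d \<longrightarrow> cmod (G z' l' - G z l) < e)"

text \<open>Semi-simplicity of tau0 for a family F tau x = f_tau(x): f_tau has N distinct
non-degenerate critical points (in C^*), varying holomorphically near tau0, whose
critical values u_i form local coordinates near tau0 (non-singular Jacobian).\<close>
definition semisimple :: "nat \<Rightarrow> ((nat \<Rightarrow> complex) \<Rightarrow> complex \<Rightarrow> complex) \<Rightarrow> (nat \<Rightarrow> complex) \<Rightarrow> bool" where
  "semisimple N F tau0 \<longleftrightarrow>
    (\<exists>r>0. \<exists>c :: nat \<Rightarrow> (nat \<Rightarrow> complex) \<Rightarrow> complex.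
       (\<forall>i\<in>{1..N}. holo N (polydisc N tau0 r) (c i)) \<and>
       (\<forall>z\<in>polydisc N tau0 r. \<forall>i\<in>{1..N}.
           c i z \<noteq> 0 \<and> deriv (F z) (c i z) = 0 \<and> deriv (deriv (F z)) (c i z) \<noteq> 0) \<and>
       (\<forall>z\<in>polydisc N tau0 r. inj_on (\<lambda>i. c i z) {1..N}) \<and>
       (\<forall>v :: nat \<Rightarrow> complex.
          (\<forall>i\<in>{1..N}. (\<Sum>j = 1..N. pd j (\<lambda>z. F z (c i z)) tau0 * v j) = 0)
          \<longrightarrow> (\<forall>j\<in>{1..N}. v j = 0)))"

definition one_point_cycle :: "nat \<Rightarrow> ((nat \<Rightarrow> complex) \<Rightarrow> complex \<Rightarrow> complex) \<Rightarrow> (nat \<Rightarrow> complex) \<Rightarrow>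
    complex \<Rightarrow> ((nat \<Rightarrow> complex) \<Rightarrow> complex \<Rightarrow> complex) \<Rightarrow> bool" where
  "one_point_cycle N F tau0 lam0 X \<longleftrightarrow>
    (\<exists>r>0. holo2 N (polydisc N tau0 r) (ball lam0 r) X \<and>
       (\<forall>z\<in>polydisc N tau0 r. \<forall>l\<in>ball lam0 r. X z l \<noteq> 0 \<and> F z (X z l) = l))"

text \<open>Residue pairing of two vectors whose derivatives of f are A and B (as functions of x).\<close>
definition res_pair :: "(complex \<Rightarrow> complex) \<Rightarrow> (complex \<Rightarrow> complex) \<Rightarrow> (complex \<Rightarrow> complex) \<Rightarrow> complex" where
  "res_pair f A B =
     (let g = (\<lambda>x. A x * B x / (x ^ 2 * deriv f x)) in - (residue g 0 + res_inf g))"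

definition eta :: "((nat \<Rightarrow> complex) \<Rightarrow> complex \<Rightarrow> complex) \<Rightarrow> (nat \<Rightarrow> complex) \<Rightarrow> nat \<Rightarrow> nat \<Rightarrow> complex" where
  "eta F tau i j = res_pair (F tau) (\<lambda>x. pd i (\<lambda>z. F z x) tau) (\<lambda>x. pd j (\<lambda>z. F z x) tau)"

end

theory Submission
  imports Defs "Jordan_Normal_Form.Determinant"
begin

text \<open>
  Everything is computed at the critical points \<open>p\<^sub>1, ..., p\<^sub>N\<close> of \<open>f = f\<^sub>\<tau>\<close>.
  Since \<open>x\<^sup>m\<^sup>+\<^sup>1 f'(x) = k \<Prod>\<^sub>s (x - p\<^sub>s)\<close>, the residue theorem on the Riemann sphere
  localises the residue pairing: \<open>(A, B) = \<Sum>\<^sub>s A(p\<^sub>s) B(p\<^sub>s) W\<^sub>s\<close> with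
  \<open>W\<^sub>s = p\<^sub>s\<^sup>m\<^sup>-\<^sup>1 / (k D\<^sub>s)\<close>, \<open>D\<^sub>s = \<Prod>\<^sub>r\<^sub>\<noteq>\<^sub>s (p\<^sub>s - p\<^sub>r)\<close>.
  Differentiating \<open>f\<^sub>\<tau>(x\<^sub>a) = \<lambda>\<close> gives \<open>\<partial>\<^sub>\<lambda>x\<^sub>a = 1/f'(x\<^sub>a)\<close> and
  \<open>\<partial>\<^sub>jx\<^sub>a = -\<partial>\<^sub>jf(x\<^sub>a)/f'(x\<^sub>a)\<close>, and Lagrange interpolation expands \<open>\<partial>\<^sub>jf(x)/(x f'(x))\<close> in
  partial fractions over the \<open>p\<^sub>s\<close>. As the matrix \<open>(\<partial>\<^sub>jf(p\<^sub>s))\<close> is invertible by semi-simplicity,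
  the equations defining \<open>I\<^sub>a\<close> say exactly \<open>\<Sum>\<^sub>i I\<^sub>a\<^sub>,\<^sub>i \<partial>\<^sub>if(p\<^sub>s) = p\<^sub>s/(x\<^sub>a - p\<^sub>s)\<close>.
  Hence \<open>(I\<^sub>a, I\<^sub>b) = \<Sum>\<^sub>s p\<^sub>s\<^sup>m\<^sup>+\<^sup>1/(k D\<^sub>s (x\<^sub>a - p\<^sub>s)(x\<^sub>b - p\<^sub>s))\<close>, which by the partial fraction
  expansion of \<open>1/f'\<close> is \<open>-(1/f'(x\<^sub>a) - 1/f'(x\<^sub>b))/(x\<^sub>a - x\<^sub>b)\<close>, and \<open>-(1/f')'(x\<^sub>a)\<close> for \<open>a = b\<close>.
\<close>

section \<open>Laurent polynomials\<close>

definition laurent :: "nat \<Rightarrow> nat \<Rightarrow> (nat \<Rightarrow> complex) \<Rightarrow> (nat \<Rightarrow> complex) \<Rightarrow> complex \<Rightarrow> complex" where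
  "laurent k m a b x = (\<Sum>i=1..k. a i * x ^ (k - i)) + (\<Sum>j=1..m. b j * inverse x ^ j)"

definition laurent_dx :: "nat \<Rightarrow> nat \<Rightarrow> (nat \<Rightarrow> complex) \<Rightarrow> (nat \<Rightarrow> complex) \<Rightarrow> complex \<Rightarrow> complex" where
  "laurent_dx k m a b x = (\<Sum>i=1..k. a i * of_nat (k - i) * x ^ (k - i - 1))
      - (\<Sum>j=1..m. b j * of_nat j * inverse x ^ Suc j)"

lemma laurent_holomorphic: "laurent k m a b holomorphic_on - {0}"
  unfolding laurent_def by (auto intro!: holomorphic_intros)

lemma laurent_dx_holomorphic: "laurent_dx k m a b holomorphic_on - {0}"
  unfolding laurent_dx_def by (auto intro!: holomorphic_intros)

lemma laurent_curve_has_field_derivative: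
  assumes da: "\<And>i. i \<in> {1..k} \<Longrightarrow> ((\<lambda>w. a w i) has_field_derivative da i) (at z)"
    and db: "\<And>j. j \<in> {1..m} \<Longrightarrow> ((\<lambda>w. b w j) has_field_derivative db j) (at z)"
    and dX: "(X has_field_derivative dX) (at z)" and X0: "X z \<noteq> 0"
  shows "((\<lambda>w. laurent k m (a w) (b w) (X w)) has_field_derivative
           (laurent k m da db (X z) + dX * laurent_dx k m (a z) (b z) (X z))) (at z)"
proof -
  have pos: "((\<lambda>w. a w i * X w ^ (k - i)) has_field_derivative
      (da i * X z ^ (k - i) + dX * (a z i * of_nat (k - i) * X z ^ (k - i - 1)))) (at z)"
    if "i \<in> {1..k}" for i
    using da[OF that] dX by (auto intro!: derivative_eq_intros simp: algebra_simps)
  have neg: "((\<lambda>w. b w j * inverse (X w) ^ j) has_field_derivative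
      (db j * inverse (X z) ^ j - dX * (b z j * of_nat j * inverse (X z) ^ Suc j))) (at z)"
    if j: "j \<in> {1..m}" for j
  proof -
    have "((\<lambda>w. b w j * inverse (X w) ^ j) has_field_derivative
       (db j * inverse (X z) ^ j
        + b z j * (of_nat j * (- (inverse (X z) * dX * inverse (X z)) * inverse (X z) ^ (j - 1))))) (at z)"
      using db[OF j] dX X0 by (auto intro!: derivative_eq_intros)
    moreover have "inverse (X z) * inverse (X z) ^ (j - 1) = inverse (X z) ^ j"
      using j by (cases j) auto
    ultimately show ?thesis
      by (simp add: algebra_simps) (metis (no_types, lifting) mult.left_commute power_Suc)
  qed
  have "((\<lambda>w. laurent k m (a w) (b w) (X w)) has_field_derivative
      ((\<Sum>i=1..k. da i * X z ^ (k - i) + dX * (a z i * of_nat (k - i) * X z ^ (k - i - 1)))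
       + (\<Sum>j=1..m. db j * inverse (X z) ^ j - dX * (b z j * of_nat j * inverse (X z) ^ Suc j)))) (at z)"
    unfolding laurent_def by (intro DERIV_add DERIV_sum pos neg) (auto simp: power_inverse)
  then show ?thesis
    by (simp add: laurent_def laurent_dx_def sum.distrib sum_subtractf sum_distrib_left algebra_simps)
qed

lemma mult_laurent_dx:
  assumes x: "x \<noteq> 0"
  shows "x * laurent_dx k m a b x = laurent k m (\<lambda>i. of_nat (k - i) * a i) (\<lambda>j. - (of_nat j * b j)) x"
proof -
  have pos: "x * (a i * of_nat (k - i) * x ^ (k - i - 1)) = of_nat (k - i) * a i * x ^ (k - i)" for i
  proof (cases "k - i")
    case (Suc n) then show ?thesis by (simp add: mult_ac)
  qed simp
  have neg: "x * (b j * of_nat j * inverse x ^ Suc j) = - (- (of_nat j * b j) * inverse x ^ j)" for j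
    using x by (simp add: field_simps)
  show ?thesis
    unfolding laurent_dx_def laurent_def right_diff_distrib sum_distrib_left pos neg
    by (simp add: sum_negf)
qed

definition laurent_numerator :: "nat \<Rightarrow> nat \<Rightarrow> (nat \<Rightarrow> complex) \<Rightarrow> (nat \<Rightarrow> complex) \<Rightarrow> complex poly" where
  "laurent_numerator k m a b =
     (\<Sum>i=1..k. Polynomial.monom (a i) (k - i + m)) + (\<Sum>j=1..m. Polynomial.monom (b j) (m - j))"

lemma poly_laurent_numerator:
  assumes x: "x \<noteq> 0"
  shows "poly (laurent_numerator k m a b) x = x ^ m * laurent k m a b x"
proof -
  have pos: "a i * x ^ (k - i + m) = x ^ m * (a i * x ^ (k - i))" for i
    by (simp add: power_add mult_ac)
  have neg: "b j * x ^ (m - j) = x ^ m * (b j * inverse x ^ j)" if "j \<in> {1..m}" for j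
  proof -
    have "x ^ m = x ^ (m - j) * x ^ j" using that by (simp add: power_add[symmetric])
    then show ?thesis using x by (simp add: field_simps)
  qed
  have "poly (laurent_numerator k m a b) x
      = (\<Sum>i=1..k. a i * x ^ (k - i + m)) + (\<Sum>j=1..m. b j * x ^ (m - j))"
    by (simp add: laurent_numerator_def poly_sum poly_monom)
  also have "(\<Sum>i=1..k. a i * x ^ (k - i + m)) = (\<Sum>i=1..k. x ^ m * (a i * x ^ (k - i)))"
    by (rule sum.cong[OF refl]) (rule pos)
  also have "(\<Sum>j=1..m. b j * x ^ (m - j)) = (\<Sum>j=1..m. x ^ m * (b j * inverse x ^ j))"
    by (rule sum.cong[OF refl]) (rule neg)
  finally show ?thesis
    by (simp add: laurent_def distrib_left sum_distrib_left)
qed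

lemma degree_laurent_numerator_less:
  assumes "k \<ge> 1"
  shows "Polynomial.degree (laurent_numerator k m a b) < k + m"
proof -
  have "Polynomial.degree (laurent_numerator k m a b) \<le> k + m - 1"
    unfolding laurent_numerator_def
    by (intro degree_add_le degree_sum_le; (rule order.trans[OF degree_monom_le])?) (use assms in auto)
  then show ?thesis using assms by simp
qed

section \<open>Lagrange interpolation and partial fractions\<close>

definition root_poly :: "(nat \<Rightarrow> complex) \<Rightarrow> nat set \<Rightarrow> complex poly" where
  "root_poly p A = (\<Prod>t\<in>A. [:- p t, 1:])"

lemma poly_root_poly: "poly (root_poly p A) x = (\<Prod>t\<in>A. x - p t)"
  by (simp add: root_poly_def poly_prod)

lemma degree_root_poly: "finite A \<Longrightarrow> Polynomial.degree (root_poly p A) = card A"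
  unfolding root_poly_def by (subst degree_prod_sum_eq) auto

lemma coeff_root_poly_card: "finite A \<Longrightarrow> Polynomial.coeff (root_poly p A) (card A) = 1"
  using lead_coeff_prod[of "\<lambda>t. [:- p t, 1:]" A] degree_root_poly[of A p]
  by (simp add: root_poly_def)

lemma poly_root_poly_at_root:
  assumes "finite A" and "s \<in> A"
  shows "poly (root_poly p A) (p s) = 0"
  unfolding poly_root_poly by (intro prod_zero bexI[of _ s]) (use assms in auto)

lemma prod_diff_nonzero:
  fixes p :: "nat \<Rightarrow> complex"
  assumes "finite A" and "inj_on p A" and "s \<in> A"
  shows "(\<Prod>t\<in>A - {s}. p s - p t) \<noteq> 0"
  using assms by (auto simp: inj_on_def)

lemma lagrange_interpolation:
  fixes p :: "nat \<Rightarrow> complex" and u :: "complex poly"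
  assumes inj: "inj_on p {1..N}" and deg: "Polynomial.degree u < N"
  shows "poly u x = (\<Sum>s=1..N. poly u (p s) / (\<Prod>t\<in>{1..N}-{s}. p s - p t) * (\<Prod>t\<in>{1..N}-{s}. x - p t))"
proof -
  define L where "L = (\<Sum>s=1..N. Polynomial.smult (poly u (p s) / (\<Prod>t\<in>{1..N}-{s}. p s - p t))
                                    (root_poly p ({1..N}-{s})))"
  have poly_L: "poly L x = (\<Sum>s=1..N. poly u (p s) / (\<Prod>t\<in>{1..N}-{s}. p s - p t) * (\<Prod>t\<in>{1..N}-{s}. x - p t))"
    for x unfolding L_def poly_sum poly_smult poly_root_poly ..
  have "Polynomial.degree L \<le> N - 1"
    unfolding L_def
    by (intro degree_sum_le order.trans[OF degree_smult_le]) (auto simp: degree_root_poly)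
  then have deg_L: "Polynomial.degree L < card (p ` {1..N})"
    using inj deg by (simp add: card_image)
  have interpolates: "poly L (p r) = poly u (p r)" if r: "r \<in> {1..N}" for r
  proof -
    have vanish: "(\<Prod>t\<in>{1..N}-{s}. p r - p t) = 0" if "s \<in> {1..N} - {r}" for s
      by (rule prod_zero) (use r that in auto)
    have "poly L (p r) = (\<Sum>s\<in>{r}. poly u (p s) / (\<Prod>t\<in>{1..N}-{s}. p s - p t) * (\<Prod>t\<in>{1..N}-{s}. p r - p t))"
      unfolding poly_L using r vanish by (intro sum.mono_neutral_right) auto
    then show ?thesis using prod_diff_nonzero[OF _ inj r] by simp
  qed
  have "u = L"
  proof (rule poly_eqI_degree[of "p ` {1..N}"])
    show "poly u x = poly L x" if "x \<in> p ` {1..N}" for x using that interpolates by auto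
    show "Polynomial.degree u < card (p ` {1..N})" using deg inj by (simp add: card_image)
  qed (rule deg_L)
  then have "poly u x = poly L x" by simp
  also have "\<dots> = (\<Sum>s=1..N. poly u (p s) / (\<Prod>t\<in>{1..N}-{s}. p s - p t) * (\<Prod>t\<in>{1..N}-{s}. x - p t))"
    by (rule poly_L)
  finally show ?thesis .
qed

lemma lagrange_partial_fractions:
  fixes p :: "nat \<Rightarrow> complex" and u :: "complex poly"
  assumes inj: "inj_on p {1..N}" and deg: "Polynomial.degree u < N" and x: "x \<notin> p ` {1..N}"
  shows "poly u x / (\<Prod>t=1..N. x - p t)
       = (\<Sum>s=1..N. poly u (p s) / ((\<Prod>t\<in>{1..N}-{s}. p s - p t) * (x - p s)))"
proof -
  have cancel: "a / d * b / (y * b) = a / (d * y)" if "b \<noteq> 0" "d \<noteq> 0" "y \<noteq> 0" for a b d y :: complex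
    using that by (simp add: field_simps)
  have "poly u x / (\<Prod>t=1..N. x - p t)
      = (\<Sum>s=1..N. poly u (p s) / (\<Prod>t\<in>{1..N}-{s}. p s - p t) * (\<Prod>t\<in>{1..N}-{s}. x - p t)
                    / (\<Prod>t=1..N. x - p t))"
    by (subst lagrange_interpolation[OF inj deg]) (simp add: sum_divide_distrib)
  also have "\<dots> = (\<Sum>s=1..N. poly u (p s) / ((\<Prod>t\<in>{1..N}-{s}. p s - p t) * (x - p s)))"
  proof (rule sum.cong[OF refl])
    fix s assume s: "s \<in> {1..N}"
    have "(\<Prod>t=1..N. x - p t) = (x - p s) * (\<Prod>t\<in>{1..N}-{s}. x - p t)"
      using s by (simp add: prod.remove)
    moreover have "(\<Prod>t\<in>{1..N}-{s}. x - p t) \<noteq> 0" "x - p s \<noteq> 0" using x s by auto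
    ultimately show "poly u (p s) / (\<Prod>t\<in>{1..N}-{s}. p s - p t) * (\<Prod>t\<in>{1..N}-{s}. x - p t)
                 / (\<Prod>t=1..N. x - p t)
             = poly u (p s) / ((\<Prod>t\<in>{1..N}-{s}. p s - p t) * (x - p s))"
      using cancel prod_diff_nonzero[OF _ inj s] by simp
  qed
  finally show ?thesis .
qed

lemma has_field_derivative_simple_fraction:
  fixes C e c :: complex
  assumes "e \<noteq> 0" and "x \<noteq> c"
  shows "((\<lambda>y. C / (e * (y - c))) has_field_derivative - (C / (e * (x - c) ^ 2))) (at x)"
proof -
  have "((\<lambda>y. C / (e * (y - c))) has_field_derivative - (C * e / (e * (x - c)) ^ 2)) (at x)"
    using assms by (auto intro!: derivative_eq_intros simp: power2_eq_square)
  then show ?thesis using assms(1) by (simp add: power2_eq_square mult_ac)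
qed

section \<open>Square linear systems\<close>

definition mat_of_indexed :: "nat \<Rightarrow> (nat \<Rightarrow> nat \<Rightarrow> complex) \<Rightarrow> complex mat" where
  "mat_of_indexed N M = mat N N (\<lambda>(i, j). M (Suc i) (Suc j))"

lemma det_mat_of_indexed_nonzero_iff:
  "det (mat_of_indexed N M) \<noteq> 0 \<longleftrightarrow>
     (\<forall>v. (\<forall>i\<in>{1..N}. (\<Sum>j=1..N. M i j * v j) = 0) \<longrightarrow> (\<forall>j\<in>{1..N}. v j = 0))"
  (is "_ \<longleftrightarrow> ?inj")
proof -
  let ?A = "mat_of_indexed N M"
  have A: "?A \<in> carrier_mat N N" by (simp add: mat_of_indexed_def)
  have mult: "vec_index (?A *\<^sub>v w) i = (\<Sum>j=1..N. M (Suc i) j * vec_index w (j - 1))"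
    if "w \<in> carrier_vec N" "i < N" for w i
    using that sum_bounds_lt_plus1[of "\<lambda>j. M (Suc i) j * vec_index w (j - 1)" N]
    by (simp add: mat_of_indexed_def scalar_prod_def atLeast0LessThan)
  show ?thesis
  proof
    assume det: "det ?A \<noteq> 0"
    show ?inj
    proof (intro allI impI ballI)
      fix v j assume hv: "\<forall>i\<in>{1..N}. (\<Sum>j=1..N. M i j * v j) = 0" and j: "j \<in> {1..N}"
      define w where "w = vec N (\<lambda>j. v (Suc j))"
      have w: "w \<in> carrier_vec N" by (simp add: w_def)
      have "(\<Sum>j=1..N. M (Suc i) j * vec_index w (j - 1)) = (\<Sum>j=1..N. M (Suc i) j * v j)" for i
        by (rule sum.cong[OF refl]) (auto simp: w_def)
      then have "(\<Sum>j=1..N. M (Suc i) j * vec_index w (j - 1)) = 0" if "i < N" for i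
        using hv[rule_format, of "Suc i"] that by simp
      then have "?A *\<^sub>v w = 0\<^sub>v N"
        using A w mult[OF w] by (intro eq_vecI) auto
      then have "w = 0\<^sub>v N" using det det_0_iff_vec_prod_zero[OF A] w by blast
      then show "v j = 0" using j
        by (auto simp: w_def dest!: arg_cong[where f="\<lambda>w. vec_index w (j - 1)"])
    qed
  next
    assume inj: ?inj
    show "det ?A \<noteq> 0"
    proof
      assume "det ?A = 0"
      then obtain w where w: "w \<in> carrier_vec N" "w \<noteq> 0\<^sub>v N" "?A *\<^sub>v w = 0\<^sub>v N"
        using det_0_iff_vec_prod_zero[OF A] by auto
      have "(\<Sum>j=1..N. M i j * vec_index w (j - 1)) = 0" if "i \<in> {1..N}" for i
        using mult[OF w(1), of "i - 1"] w(3) that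
        by (auto dest!: arg_cong[where f="\<lambda>u. vec_index u (i - 1)"])
      then have "vec_index w j = 0" if "j < N" for j
        using inj[rule_format, of "\<lambda>j. vec_index w (j - 1)" "Suc j"] that by auto
      then have "w = 0\<^sub>v N" using w(1) by (intro eq_vecI) auto
      with w(2) show False ..
    qed
  qed
qed

lemma transpose_injective:
  fixes M :: "nat \<Rightarrow> nat \<Rightarrow> complex"
  assumes inj: "\<forall>v. (\<forall>i\<in>{1..N}. (\<Sum>j=1..N. M i j * v j) = 0) \<longrightarrow> (\<forall>j\<in>{1..N}. v j = 0)"
    and y: "\<forall>j\<in>{1..N}. (\<Sum>i=1..N. y i * M i j) = 0"
  shows "\<forall>i\<in>{1..N}. y i = 0"
proof -
  have car: "mat_of_indexed N M \<in> carrier_mat N N" by (simp add: mat_of_indexed_def)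
  have "mat_of_indexed N (\<lambda>j i. M i j) = transpose_mat (mat_of_indexed N M)"
    by (rule eq_matI) (auto simp: mat_of_indexed_def)
  moreover have "det (mat_of_indexed N M) \<noteq> 0"
    using inj by (simp only: det_mat_of_indexed_nonzero_iff)
  ultimately have "det (mat_of_indexed N (\<lambda>j i. M i j)) \<noteq> 0"
    using det_transpose[OF car] by simp
  then show ?thesis
    using y unfolding det_mat_of_indexed_nonzero_iff by (simp add: mult.commute)
qed

section \<open>The residue at infinity\<close>

lemma contour_integral_circlepath_inversion:
  assumes rho: "rho > 0"
  shows "contour_integral (circlepath 0 rho) (\<lambda>w. g (1 / w) / w ^ 2)
       = contour_integral (circlepath 0 (1 / rho)) g"
proof -
  have inv: "(\<lambda>w::complex. 1 / w) analytic_on (- {0})"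
    by (auto intro!: analytic_intros)
  have image: "path_image (circlepath 0 rho) \<subseteq> - {0}" using rho by auto
  have "contour_integral ((\<lambda>w. 1 / w) \<circ> circlepath 0 rho) g
      = contour_integral (circlepath 0 rho) (\<lambda>w. deriv (\<lambda>w. 1 / w) w * g (1 / w))"
    by (rule contour_integral_comp_analyticW[OF inv valid_path_circlepath image])
  also have "\<dots> = contour_integral (circlepath 0 rho) (\<lambda>w. - (g (1 / w) / w ^ 2))"
  proof (rule contour_integral_cong[OF refl])
    fix w assume "w \<in> path_image (circlepath 0 rho)"
    then have w: "w \<noteq> 0" using rho by auto
    have "deriv (\<lambda>w. 1 / w) w = - 1 / w ^ 2"
      by (rule DERIV_imp_deriv) (use w in \<open>auto intro!: derivative_eq_intros simp: power2_eq_square\<close>)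
    then show "deriv (\<lambda>w. 1 / w) w * g (1 / w) = - (g (1 / w) / w ^ 2)" by simp
  qed
  also have "\<dots> = - contour_integral (circlepath 0 rho) (\<lambda>w. g (1 / w) / w ^ 2)"
    by (rule contour_integral_neg)
  finally have comp: "contour_integral ((\<lambda>w. 1 / w) \<circ> circlepath 0 rho) g
                    = - contour_integral (circlepath 0 rho) (\<lambda>w. g (1 / w) / w ^ 2)" .
  have "(\<lambda>w. 1 / w) \<circ> circlepath 0 rho = reversepath (circlepath 0 (1 / rho))"
  proof
    fix t
    have "exp (2 * of_real pi * \<i> * of_real (1 - t)) = exp (2 * of_real pi * \<i> - 2 * of_real pi * \<i> * of_real t)"
      by (simp add: algebra_simps)
    also have "\<dots> = inverse (exp (2 * of_real pi * \<i> * of_real t))"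
      by (simp add: exp_diff divide_inverse)
    finally show "((\<lambda>w. 1 / w) \<circ> circlepath 0 rho) t = reversepath (circlepath 0 (1 / rho)) t"
      by (simp add: circlepath reversepath_def divide_inverse mult.commute)
  qed
  then have "contour_integral ((\<lambda>w. 1 / w) \<circ> circlepath 0 rho) g = - contour_integral (circlepath 0 (1 / rho)) g"
    by (simp add: contour_integral_reversepath)
  with comp show ?thesis by simp
qed

lemma res_inf_eq_neg_sum_residues:
  fixes g :: "complex \<Rightarrow> complex"
  assumes fin: "finite S" and holo: "g holomorphic_on - S"
  shows "res_inf g = - (\<Sum>z\<in>S. residue g z)"
proof -
  define R where "R = 1 + (\<Sum>z\<in>S. norm z)"
  have R_big: "norm z < R" if "z \<in> S" for z
    using member_le_sum[of z S norm] that fin by (simp add: R_def)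
  have R0: "R > 0" unfolding R_def by (simp add: sum_nonneg add_pos_nonneg)
  define h where "h = (\<lambda>w. g (1 / w) / w ^ 2)"
  have "contour_integral (circlepath 0 (2 * R)) g
      = 2 * pi * \<i> * (\<Sum>p\<in>S. winding_number (circlepath 0 (2 * R)) p * residue g p)"
  proof (rule Residue_theorem[of UNIV S])
    show "path_image (circlepath 0 (2 * R)) \<subseteq> UNIV - S"
      using R_big R0 by (fastforce simp: sphere_def)
  qed (use fin holo in \<open>auto simp: Compl_eq_Diff_UNIV\<close>)
  also have "(\<Sum>p\<in>S. winding_number (circlepath 0 (2 * R)) p * residue g p) = (\<Sum>p\<in>S. residue g p)"
  proof (rule sum.cong[OF refl])
    fix p assume "p \<in> S"
    then have "norm (p - 0) < 2 * R" using R_big R0 by fastforce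
    then show "winding_number (circlepath 0 (2 * R)) p * residue g p = residue g p"
      by (simp add: winding_number_circlepath)
  qed
  finally have outer: "contour_integral (circlepath 0 (2 * R)) g = 2 * pi * \<i> * (\<Sum>p\<in>S. residue g p)" .
  have "(\<lambda>w. 1 / w) ` (ball 0 (1 / R) - {0}) \<subseteq> - S"
  proof
    fix y :: complex assume "y \<in> (\<lambda>w. 1 / w) ` (ball 0 (1 / R) - {0})"
    then obtain w where w: "w \<in> ball 0 (1 / R)" "w \<noteq> 0" "y = 1 / w" by blast
    then have "R * norm w < 1" "norm w > 0" using R0 by (auto simp: field_simps)
    moreover have "norm y = 1 / norm w" using w(3) by (simp add: norm_divide)
    ultimately have "R < norm y" by (simp add: pos_less_divide_eq)
    then show "y \<in> - S" using R_big by fastforce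
  qed
  then have "h holomorphic_on (ball 0 (1 / R) - {0})"
    unfolding h_def
    by (intro holomorphic_intros holomorphic_on_compose_gen[OF _ holo, unfolded o_def]) auto
  then have "(h has_contour_integral 2 * pi * \<i> * residue h 0) (circlepath 0 (1 / (2 * R)))"
    by (intro base_residue[of "ball 0 (1 / R)"]) (use R0 in \<open>auto simp: field_simps\<close>)
  then have "contour_integral (circlepath 0 (1 / (2 * R))) h = 2 * pi * \<i> * residue h 0"
    by (rule contour_integral_unique)
  also have "contour_integral (circlepath 0 (1 / (2 * R))) h = contour_integral (circlepath 0 (2 * R)) g"
    unfolding h_def using contour_integral_circlepath_inversion[of "1 / (2 * R)" g] R0 by simp
  finally have "residue h 0 = (\<Sum>p\<in>S. residue g p)" using outer by simp
  then show ?thesis by (simp add: res_inf_def h_def)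
qed

section \<open>The Laurent polynomial \<open>f\<^sub>t\<close> and its critical points\<close>

text \<open>With \<open>q = Q exp t\<^sub>N\<close>, the coefficient of \<open>x\<^sup>-\<^sup>j\<close> in \<open>f\<^sub>t\<close> is \<open>t\<^sub>k\<^sub>+\<^sub>j q\<^sup>j\<close> for \<open>j < m\<close> and \<open>q\<^sup>m\<close>
  for \<open>j = m\<close>; \<open>fL_inv_coeff_deriv\<close> is its derivative in the direction \<open>dt\<close>.\<close>

definition fL_inv_coeff :: "nat \<Rightarrow> nat \<Rightarrow> complex \<Rightarrow> (nat \<Rightarrow> complex) \<Rightarrow> nat \<Rightarrow> complex" where
  "fL_inv_coeff k m Q t j = (if j < m then t (k + j) else 1) * (Q * exp (t (k + m))) ^ j"

definition fL_inv_coeff_deriv ::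
    "nat \<Rightarrow> nat \<Rightarrow> complex \<Rightarrow> (nat \<Rightarrow> complex) \<Rightarrow> (nat \<Rightarrow> complex) \<Rightarrow> nat \<Rightarrow> complex" where
  "fL_inv_coeff_deriv k m Q t dt j =
     (if j < m then dt (k + j) else 0) * (Q * exp (t (k + m))) ^ j
     + (if j < m then t (k + j) else 1) * of_nat j * (Q * exp (t (k + m))) ^ j * dt (k + m)"

definition fL_dx :: "nat \<Rightarrow> nat \<Rightarrow> complex \<Rightarrow> (nat \<Rightarrow> complex) \<Rightarrow> complex \<Rightarrow> complex" where
  "fL_dx k m Q t x = of_nat k * x ^ (k - 1) + laurent_dx k m t (fL_inv_coeff k m Q t) x"

lemma fL_dx_holomorphic: "fL_dx k m Q t holomorphic_on - {0}"
  unfolding fL_dx_def by (intro holomorphic_intros laurent_dx_holomorphic)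

lemma fL_eq_laurent:
  assumes "m \<ge> 1"
  shows "fL k m Q t x = x ^ k + laurent k m t (fL_inv_coeff k m Q t) x"
proof -
  obtain m' where m: "m = Suc m'" using assms by (cases m) auto
  have q: "(c / x) ^ j = c ^ j * inverse x ^ j" for c j
    by (simp add: divide_inverse power_mult_distrib power_inverse)
  have "(\<Sum>j=1..m'. fL_inv_coeff k m Q t j * inverse x ^ j)
      = (\<Sum>j=1..m'. t (k + j) * (Q * exp (t (k + m)) / x) ^ j)"
    unfolding q by (rule sum.cong[OF refl]) (simp add: fL_inv_coeff_def m)
  moreover have "fL_inv_coeff k m Q t m * inverse x ^ m = (Q * exp (t (k + m)) / x) ^ m"
    unfolding q by (simp add: fL_inv_coeff_def)
  ultimately show ?thesis
    unfolding fL_def laurent_def m by (simp add: algebra_simps)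
qed

lemma fL_inv_coeff_has_field_derivative:
  assumes j: "j \<in> {1..m}"
    and dt: "\<And>l. l \<in> {1..k+m} \<Longrightarrow> ((\<lambda>w. tt w l) has_field_derivative dt l) (at z)"
  shows "((\<lambda>w. fL_inv_coeff k m Q (tt w) j) has_field_derivative fL_inv_coeff_deriv k m Q (tt z) dt j) (at z)"
proof -
  have dN: "((\<lambda>w. tt w (k + m)) has_field_derivative dt (k + m)) (at z)" using dt j by auto
  define q0 where "q0 = Q * exp (tt z (k + m))"
  have "((\<lambda>w. (Q * exp (tt w (k + m))) ^ j) has_field_derivative
      of_nat j * (Q * (exp (tt z (k + m)) * dt (k + m)) * q0 ^ (j - Suc 0))) (at z)"
    unfolding q0_def by (auto intro!: derivative_eq_intros dN)
  moreover have "Q * (exp (tt z (k + m)) * dt (k + m)) * q0 ^ (j - Suc 0) = q0 ^ j * dt (k + m)"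
    using j by (cases j) (auto simp: q0_def mult_ac)
  ultimately have dq: "((\<lambda>w. (Q * exp (tt w (k + m))) ^ j) has_field_derivative
      of_nat j * (q0 ^ j * dt (k + m))) (at z)"
    by simp
  show ?thesis
  proof (cases "j < m")
    case True
    have "((\<lambda>w. tt w (k + j)) has_field_derivative dt (k + j)) (at z)" using dt j by auto
    from DERIV_mult[OF this dq]
    have "((\<lambda>w. tt w (k + j) * (Q * exp (tt w (k + m))) ^ j) has_field_derivative
        fL_inv_coeff_deriv k m Q (tt z) dt j) (at z)"
      using True by (simp add: fL_inv_coeff_deriv_def q0_def algebra_simps)
    then show ?thesis using True by (simp add: fL_inv_coeff_def)
  next
    case False
    then show ?thesis
      using dq by (simp add: fL_inv_coeff_def fL_inv_coeff_deriv_def q0_def algebra_simps)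
  qed
qed

lemma fL_curve_has_field_derivative:
  assumes m: "m \<ge> 1"
    and dt: "\<And>l. l \<in> {1..k+m} \<Longrightarrow> ((\<lambda>w. tt w l) has_field_derivative dt l) (at z)"
    and dX: "(X has_field_derivative dX) (at z)" and X0: "X z \<noteq> 0"
  shows "((\<lambda>w. fL k m Q (tt w) (X w)) has_field_derivative
           (laurent k m dt (fL_inv_coeff_deriv k m Q (tt z) dt) (X z) + dX * fL_dx k m Q (tt z) (X z))) (at z)"
proof -
  have "((\<lambda>w. laurent k m (tt w) (fL_inv_coeff k m Q (tt w)) (X w)) has_field_derivative
      (laurent k m dt (fL_inv_coeff_deriv k m Q (tt z) dt) (X z)
       + dX * laurent_dx k m (tt z) (fL_inv_coeff k m Q (tt z)) (X z))) (at z)"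
    by (rule laurent_curve_has_field_derivative[OF _ fL_inv_coeff_has_field_derivative dX X0])
       (use dt in auto)
  from DERIV_add[OF DERIV_power[OF dX, of k] this] show ?thesis
    by (simp add: fL_eq_laurent[OF m] fL_dx_def algebra_simps)
qed

text \<open>\<open>x\<^sup>m\<^sup>+\<^sup>1 f\<^sub>t'(x)\<close> is a polynomial of degree \<open>k + m\<close> with leading coefficient \<open>k\<close>, so it is
  determined by its \<open>k + m\<close> roots.\<close>

lemma fL_dx_factorization:
  fixes p :: "nat \<Rightarrow> complex"
  assumes k: "k \<ge> 1" and inj: "inj_on p {1..k+m}"
    and crit: "\<forall>s\<in>{1..k+m}. fL_dx k m Q t (p s) = 0 \<and> p s \<noteq> 0"
    and x: "x \<noteq> 0"
  shows "x ^ (m + 1) * fL_dx k m Q t x = of_nat k * (\<Prod>s=1..k+m. x - p s)"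
proof -
  define lower where "lower = laurent_numerator k m (\<lambda>i. of_nat (k - i) * t i)
                                 (\<lambda>j. - (of_nat j * fL_inv_coeff k m Q t j))"
  define P where "P = Polynomial.monom (of_nat k) (k + m) + lower"
  have poly_P: "poly P y = y ^ (m + 1) * fL_dx k m Q t y" if y: "y \<noteq> 0" for y
  proof -
    have "y ^ (m + 1) * fL_dx k m Q t y
        = of_nat k * y ^ (m + 1 + (k - 1)) + y ^ m * (y * laurent_dx k m t (fL_inv_coeff k m Q t) y)"
      by (simp add: fL_dx_def power_add algebra_simps)
    also have "m + 1 + (k - 1) = k + m" using k by simp
    finally show ?thesis
      using y by (simp add: P_def lower_def poly_monom poly_laurent_numerator mult_laurent_dx)
  qed
  have deg_lower: "Polynomial.degree lower < k + m"
    unfolding lower_def by (rule degree_laurent_numerator_less[OF k])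
  have "P = Polynomial.smult (of_nat k) (root_poly p {1..k+m})"
  proof (rule poly_eqI_degree_lead_coeff[where n="k + m" and A="p ` {1..k+m}"])
    show "Polynomial.coeff P (k + m) = Polynomial.coeff (Polynomial.smult (of_nat k) (root_poly p {1..k+m})) (k + m)"
      using deg_lower coeff_root_poly_card[of "{1..k+m}" p] by (simp add: P_def coeff_eq_0)
    show "k + m \<le> card (p ` {1..k+m})" using inj by (simp add: card_image)
    show "Polynomial.degree P \<le> k + m"
      unfolding P_def using deg_lower by (intro degree_add_le) (auto intro: order.trans[OF degree_monom_le])
    show "Polynomial.degree (Polynomial.smult (of_nat k) (root_poly p {1..k+m})) \<le> k + m"
      by (rule order.trans[OF degree_smult_le]) (simp add: degree_root_poly)
  next
    fix z assume "z \<in> p ` {1..k+m}"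
    then show "poly P z = poly (Polynomial.smult (of_nat k) (root_poly p {1..k+m})) z"
      using poly_P crit poly_root_poly_at_root[of "{1..k+m}"] by force
  qed
  then show ?thesis using poly_P[OF x] by (simp add: poly_root_poly)
qed

locale critical_points =
  fixes k m :: nat and Q :: complex and t :: "nat \<Rightarrow> complex" and p :: "nat \<Rightarrow> complex"
  assumes k_ge_1: "k \<ge> 1" and m_ge_1: "m \<ge> 1" and inj: "inj_on p {1..k+m}"
    and critical: "\<forall>s\<in>{1..k+m}. fL_dx k m Q t (p s) = 0 \<and> p s \<noteq> 0"
begin

definition D :: "nat \<Rightarrow> complex" where
  "D s = (\<Prod>r\<in>{1..k+m}-{s}. p s - p r)"

definition P :: "complex \<Rightarrow> complex" where
  "P x = (\<Prod>s=1..k+m. x - p s)"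

definition W :: "nat \<Rightarrow> complex" where
  "W s = p s ^ (m - 1) / (of_nat k * D s)"

abbreviation poles :: "complex set" where
  "poles \<equiv> insert 0 (p ` {1..k+m})"

lemma critical_point_nonzero: "s \<in> {1..k+m} \<Longrightarrow> p s \<noteq> 0"
  using critical by blast

lemma D_nonzero: "s \<in> {1..k+m} \<Longrightarrow> D s \<noteq> 0"
  unfolding D_def by (rule prod_diff_nonzero[OF _ inj]) auto

lemma P_nonzero: "x \<notin> poles \<Longrightarrow> P x \<noteq> 0"
  unfolding P_def by auto

lemma fL_dx_eq: "x \<noteq> 0 \<Longrightarrow> fL_dx k m Q t x = of_nat k * P x / x ^ (m + 1)"
  using fL_dx_factorization[OF k_ge_1 inj critical, of x] by (simp add: P_def field_simps)

lemma fL_dx_nonzero: "x \<notin> poles \<Longrightarrow> fL_dx k m Q t x \<noteq> 0"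
  using fL_dx_eq[of x] P_nonzero[of x] k_ge_1 by auto

lemma notin_poles: "x \<noteq> 0 \<Longrightarrow> fL_dx k m Q t x \<noteq> 0 \<Longrightarrow> x \<notin> poles"
  using critical by auto

lemma laurent_partial_fractions:
  assumes x: "x \<notin> poles"
  shows "laurent k m a b x / (x * fL_dx k m Q t x)
       = (\<Sum>s=1..k+m. p s ^ m / (of_nat k * D s * (x - p s)) * laurent k m a b (p s))"
proof -
  have x0: "x \<noteq> 0" using x by auto
  have "poly (laurent_numerator k m a b) x / P x
      = (\<Sum>s=1..k+m. poly (laurent_numerator k m a b) (p s) / (D s * (x - p s)))"
    unfolding P_def D_def
    by (rule lagrange_partial_fractions[OF inj degree_laurent_numerator_less[OF k_ge_1]]) (use x in auto)
  also have "\<dots> = (\<Sum>s=1..k+m. p s ^ m * laurent k m a b (p s) / (D s * (x - p s)))"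
    by (intro sum.cong refl) (simp add: poly_laurent_numerator critical_point_nonzero)
  finally have numerator: "x ^ m * laurent k m a b x / P x
      = (\<Sum>s=1..k+m. p s ^ m * laurent k m a b (p s) / (D s * (x - p s)))"
    using x0 by (simp add: poly_laurent_numerator)
  have "laurent k m a b x / (x * fL_dx k m Q t x) = (x ^ m * laurent k m a b x / P x) / of_nat k"
    using x0 P_nonzero[OF x] k_ge_1 by (simp add: fL_dx_eq field_simps)
  also have "\<dots> = (\<Sum>s=1..k+m. p s ^ m / (of_nat k * D s * (x - p s)) * laurent k m a b (p s))"
    unfolding numerator sum_divide_distrib by (intro sum.cong) (auto simp: field_simps)
  finally show ?thesis .
qed

text \<open>\<open>c_inf\<close> is the value of \<open>1 / f'\<close> at infinity, where \<open>f'(x) \<sim> k x\<^sup>k\<^sup>-\<^sup>1\<close>.\<close>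

definition c_inf :: complex where
  "c_inf = (if k = 1 then 1 else 0)"

lemma inverse_fL_dx_partial_fractions:
  assumes x: "x \<notin> poles"
  shows "1 / fL_dx k m Q t x = c_inf + (\<Sum>s=1..k+m. p s ^ (m + 1) / (of_nat k * D s * (x - p s)))"
proof -
  define R where "R = root_poly p {1..k+m}"
  define u where "u = Polynomial.monom 1 (m + 1) - (if k = 1 then R else 0)"
  have deg_u: "Polynomial.degree u < k + m"
  proof (cases "k = 1")
    case True
    show ?thesis
    proof (rule degree_lessI)
      show "\<forall>i\<ge>k + m. Polynomial.coeff u i = 0"
      proof (intro allI impI)
        fix i assume i: "i \<ge> k + m"
        have "Polynomial.coeff R i = 0" if "i > k + m"
          using that unfolding R_def by (intro coeff_eq_0) (simp add: degree_root_poly)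
        then show "Polynomial.coeff u i = 0"
          using True i coeff_root_poly_card[of "{1..k+m}" p]
          by (cases "i = k + m") (auto simp: u_def R_def)
      qed
    qed (use k_ge_1 in simp)
  next
    case False
    then show ?thesis using k_ge_1 by (simp add: u_def degree_monom_eq)
  qed
  have u_values: "poly u (p s) = p s ^ (m + 1)" if "s \<in> {1..k+m}" for s
  proof -
    have "poly R (p s) = 0" unfolding R_def by (rule poly_root_poly_at_root) (use that in auto)
    then show ?thesis by (simp add: u_def poly_monom)
  qed
  have "poly u x / P x = (\<Sum>s=1..k+m. poly u (p s) / (D s * (x - p s)))"
    unfolding P_def D_def by (rule lagrange_partial_fractions[OF inj deg_u]) (use x in auto)
  also have "\<dots> = (\<Sum>s=1..k+m. p s ^ (m + 1) / (D s * (x - p s)))"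
    by (intro sum.cong refl) (simp add: u_values)
  finally have u_fractions: "poly u x / P x = (\<Sum>s=1..k+m. p s ^ (m + 1) / (D s * (x - p s)))" .
  have x0: "x \<noteq> 0" using x by auto
  have "x ^ (m + 1) = poly u x + c_inf * P x"
    by (simp add: u_def R_def c_inf_def poly_monom poly_root_poly P_def)
  then have "1 / fL_dx k m Q t x = (poly u x + c_inf * P x) / (of_nat k * P x)"
    using x0 P_nonzero[OF x] k_ge_1 by (simp add: fL_dx_eq field_simps)
  also have "\<dots> = c_inf + (poly u x / P x) / of_nat k"
    using P_nonzero[OF x] k_ge_1 by (auto simp: c_inf_def field_simps)
  also have "\<dots> = c_inf + (\<Sum>s=1..k+m. p s ^ (m + 1) / (of_nat k * D s * (x - p s)))"
    unfolding u_fractions sum_divide_distrib by (simp add: field_simps)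
  finally show ?thesis .
qed

lemma pairing_integrand_holomorphic:
  assumes A: "A holomorphic_on - {0}" and B: "B holomorphic_on - {0}" and S: "S \<subseteq> - poles"
  shows "(\<lambda>x. A x * B x / (x ^ 2 * fL_dx k m Q t x)) holomorphic_on S"
proof (intro holomorphic_intros)
  have "S \<subseteq> - {0}" using S by auto
  then show "A holomorphic_on S" "B holomorphic_on S" "fL_dx k m Q t holomorphic_on S"
    by (auto intro: holomorphic_on_subset[OF A] holomorphic_on_subset[OF B]
                    holomorphic_on_subset[OF fL_dx_holomorphic])
next
  fix x assume "x \<in> S"
  then show "x ^ 2 * fL_dx k m Q t x \<noteq> 0" using S fL_dx_nonzero by auto
qed

lemma residue_at_critical_point:
  assumes s: "s \<in> {1..k+m}"
    and g: "\<And>x. x \<notin> poles \<Longrightarrow> g x = A x * B x / (x ^ 2 * fL_dx k m Q t x)"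
    and A: "A holomorphic_on - {0}" and B: "B holomorphic_on - {0}"
  shows "residue g (p s) = A (p s) * B (p s) * W s"
proof -
  define U where "U = - (poles - {p s})"
  define H where "H w = A w * B w * w ^ (m - 1) / (of_nat k * (\<Prod>r\<in>{1..k+m}-{s}. w - p r))" for w
  have ps0: "p s \<noteq> 0" using critical s by auto
  have "open U" unfolding U_def by (intro open_Compl finite_imp_closed) auto
  moreover have "p s \<in> U" by (simp add: U_def)
  ultimately have U: "open U" "p s \<in> U" .
  have U0: "w \<noteq> 0" if "w \<in> U" for w using that ps0 by (auto simp: U_def)
  have prod_nonzero: "(\<Prod>r\<in>{1..k+m}-{s}. w - p r) \<noteq> 0" if w: "w \<in> U" for w
  proof -
    have "w \<noteq> p r" if r: "r \<in> {1..k+m} - {s}" for r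
    proof
      assume "w = p r"
      then have "p r = p s" using w r by (auto simp: U_def)
      then show False using inj_onD[OF inj _ _ s] r by blast
    qed
    then show ?thesis by auto
  qed
  have "H holomorphic_on U"
    unfolding H_def
  proof (intro holomorphic_intros)
    show "A holomorphic_on U" "B holomorphic_on U"
      using U0 by (auto intro: holomorphic_on_subset[OF A] holomorphic_on_subset[OF B])
  next
    fix w assume "w \<in> U"
    then show "of_nat k * (\<Prod>r\<in>{1..k+m}-{s}. w - p r) \<noteq> 0"
      using prod_nonzero k_ge_1 by simp
  qed
  then have "isCont H (p s)"
    using continuous_on_eq_continuous_at[OF U(1)] U(2) holomorphic_on_imp_continuous_on by blast
  then have "(H \<longlongrightarrow> H (p s)) (at (p s))"
    by (simp add: isCont_def)
  moreover have "H w = g w * (w - p s)" if w: "w \<in> U - {p s}" for w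
  proof -
    have wS: "w \<notin> poles" and w0: "w \<noteq> 0" using w s by (auto simp: U_def)
    have P_split: "P w = (w - p s) * (\<Prod>r\<in>{1..k+m}-{s}. w - p r)"
      unfolding P_def using s by (simp add: prod.remove)
    have pw: "w ^ (m + 1) = w ^ (m - 1) * w ^ 2"
      using m_ge_1 by (simp add: power_add[symmetric])
    have "g w = A w * B w * w ^ (m + 1) / (w ^ 2 * (of_nat k * P w))"
      using g[OF wS] w0 by (simp add: fL_dx_eq)
    also have "\<dots> = A w * B w * w ^ (m - 1) / (of_nat k * P w)"
      unfolding pw using w0 by (simp add: field_simps)
    finally have g_eq: "g w = A w * B w * w ^ (m - 1) / (of_nat k * ((w - p s) * (\<Prod>r\<in>{1..k+m}-{s}. w - p r)))"
      by (simp only: P_split)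
    have cancel: "C / (K * E) = C / (K * (d * E)) * d" if "d \<noteq> 0" "E \<noteq> 0" "K \<noteq> 0" for C K E d :: complex
      using that by (simp add: field_simps)
    show ?thesis
      unfolding H_def g_eq by (rule cancel) (use w prod_nonzero[of w] k_ge_1 in auto)
  qed
  ultimately have "((\<lambda>w. g w * (w - p s)) \<longlongrightarrow> H (p s)) (at (p s))"
    by (rule Lim_transform_eventually[OF _ eventually_mono[OF eventually_at_in_open[OF U]]]) auto
  moreover have "g holomorphic_on U - {p s}"
  proof (rule holomorphic_transform)
    show "(\<lambda>x. A x * B x / (x ^ 2 * fL_dx k m Q t x)) holomorphic_on U - {p s}"
      by (rule pairing_integrand_holomorphic[OF A B]) (auto simp: U_def)
  qed (use g in \<open>auto simp: U_def\<close>)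
  ultimately have "residue g (p s) = H (p s)"
    by (intro residue_simple'[OF U]) 
  then show ?thesis by (simp add: H_def D_def W_def)
qed

text \<open>The residue pairing localises at the critical points: the integrand has no further
  poles in \<open>\<complex>\<^sup>*\<close>, and the contributions of \<open>0\<close> and \<open>\<infinity>\<close> are traded for the finite ones by
  the residue theorem on the sphere.\<close>

lemma res_pair_eq_critical_sum:
  assumes A: "A holomorphic_on - {0}" and B: "B holomorphic_on - {0}"
    and A': "\<And>x. x \<noteq> 0 \<Longrightarrow> A' x = A x" and B': "\<And>x. x \<noteq> 0 \<Longrightarrow> B' x = B x"
    and f: "\<And>x. x \<noteq> 0 \<Longrightarrow> deriv f x = fL_dx k m Q t x"
  shows "res_pair f A' B' = (\<Sum>s=1..k+m. A (p s) * B (p s) * W s)"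
proof -
  define g where "g x = A' x * B' x / (x ^ 2 * deriv f x)" for x
  have g: "g x = A x * B x / (x ^ 2 * fL_dx k m Q t x)" if "x \<notin> poles" for x
    using that A' B' f by (auto simp: g_def)
  have "g holomorphic_on - poles"
  proof (rule holomorphic_transform)
    show "(\<lambda>x. A x * B x / (x ^ 2 * fL_dx k m Q t x)) holomorphic_on - poles"
      by (rule pairing_integrand_holomorphic[OF A B]) simp
  qed (use g in auto)
  moreover have "0 \<notin> p ` {1..k+m}" using critical by auto
  ultimately have "res_inf g = - (residue g 0 + (\<Sum>z\<in>p ` {1..k+m}. residue g z))"
    using res_inf_eq_neg_sum_residues[of poles g] by simp
  then have "res_pair f A' B' = (\<Sum>z\<in>p ` {1..k+m}. residue g z)"
    by (simp add: res_pair_def g_def[abs_def] Let_def)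
  also have "(\<Sum>z\<in>p ` {1..k+m}. residue g z) = (\<Sum>s=1..k+m. residue g (p s))"
    by (rule sum.reindex[OF inj, unfolded o_def])
  also have "\<dots> = (\<Sum>s=1..k+m. A (p s) * B (p s) * W s)"
    by (intro sum.cong refl residue_at_critical_point[OF _ g A B])
  finally show ?thesis .
qed

lemma critical_sum_two_points:
  assumes x: "x \<notin> poles" and y: "y \<notin> poles" and ne: "x \<noteq> y"
  shows "(\<Sum>s=1..k+m. p s ^ (m + 1) / (of_nat k * D s * (x - p s) * (y - p s)))
       = - (1 / fL_dx k m Q t x - 1 / fL_dx k m Q t y) / (x - y)"
proof -
  have "1 / fL_dx k m Q t x - 1 / fL_dx k m Q t y
      = (\<Sum>s=1..k+m. p s ^ (m + 1) / (of_nat k * D s * (x - p s)) - p s ^ (m + 1) / (of_nat k * D s * (y - p s)))"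
    unfolding inverse_fL_dx_partial_fractions[OF x] inverse_fL_dx_partial_fractions[OF y] sum_subtractf
    by simp
  also have "\<dots> = (\<Sum>s=1..k+m. (y - x) * (p s ^ (m + 1) / (of_nat k * D s * (x - p s) * (y - p s))))"
  proof (rule sum.cong[OF refl])
    fix s assume s: "s \<in> {1..k+m}"
    have diff: "C / (e * a) - C / (e * b) = (b - a) * (C / (e * a * b))"
      if "a \<noteq> 0" "b \<noteq> 0" "e \<noteq> 0" for C e a b :: complex
      using that by (simp add: field_simps)
    have "x - p s \<noteq> 0" "y - p s \<noteq> 0" "of_nat k * D s \<noteq> 0"
      using x y s D_nonzero[OF s] k_ge_1 by auto
    from diff[OF this, of "p s ^ (m + 1)"]
    show "p s ^ (m + 1) / (of_nat k * D s * (x - p s)) - p s ^ (m + 1) / (of_nat k * D s * (y - p s))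
        = (y - x) * (p s ^ (m + 1) / (of_nat k * D s * (x - p s) * (y - p s)))"
      by simp
  qed
  also have "\<dots> = (y - x) * (\<Sum>s=1..k+m. p s ^ (m + 1) / (of_nat k * D s * (x - p s) * (y - p s)))"
    by (rule sum_distrib_left[symmetric])
  finally have "1 / fL_dx k m Q t x - 1 / fL_dx k m Q t y
      = (y - x) * (\<Sum>s=1..k+m. p s ^ (m + 1) / (of_nat k * D s * (x - p s) * (y - p s)))" .
  moreover have "S = - d / (x - y)" if "d = (y - x) * S" for S d :: complex
    using that ne by (simp add: field_simps)
  ultimately show ?thesis by blast
qed

lemma critical_sum_double_point:
  assumes x: "x \<notin> poles"
  shows "(\<Sum>s=1..k+m. p s ^ (m + 1) / (of_nat k * D s * (x - p s) ^ 2))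
       = deriv (fL_dx k m Q t) x / (fL_dx k m Q t x) ^ 2"
proof -
  let ?f = "fL_dx k m Q t"
  define G where "G y = c_inf + (\<Sum>s=1..k+m. p s ^ (m + 1) / (of_nat k * D s * (y - p s)))" for y
  have "((\<lambda>y. \<Sum>s=1..k+m. p s ^ (m + 1) / (of_nat k * D s * (y - p s))) has_field_derivative
          (\<Sum>s=1..k+m. - (p s ^ (m + 1) / (of_nat k * D s * (x - p s) ^ 2)))) (at x)"
  proof (rule DERIV_sum)
    fix s assume s: "s \<in> {1..k+m}"
    have "of_nat k * D s \<noteq> 0" "x \<noteq> p s" using x s D_nonzero[OF s] k_ge_1 by auto
    then show "((\<lambda>y. p s ^ (m + 1) / (of_nat k * D s * (y - p s))) has_field_derivative
        - (p s ^ (m + 1) / (of_nat k * D s * (x - p s) ^ 2))) (at x)"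
      by (rule has_field_derivative_simple_fraction)
  qed
  from DERIV_add[OF DERIV_const[of c_inf] this]
  have G_deriv: "(G has_field_derivative (\<Sum>s=1..k+m. - (p s ^ (m + 1) / (of_nat k * D s * (x - p s) ^ 2)))) (at x)"
    unfolding G_def by simp
  have G_eq: "G y = inverse (?f y)" if "y \<in> - poles" for y
    using inverse_fL_dx_partial_fractions[of y] that by (simp add: G_def divide_inverse)
  have inv_G: "((\<lambda>y. inverse (?f y)) has_field_derivative
      (\<Sum>s=1..k+m. - (p s ^ (m + 1) / (of_nat k * D s * (x - p s) ^ 2)))) (at x)"
  proof (rule has_field_derivative_transform_within_open[OF G_deriv _ _ G_eq])
    show "open (- poles)" by (intro open_Compl finite_imp_closed) auto
  qed (use x in auto)
  have "?f field_differentiable at x"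
    using x by (intro holomorphic_on_imp_differentiable_at[OF fL_dx_holomorphic]) auto
  then have "((\<lambda>y. inverse (?f y)) has_field_derivative
      - (inverse (?f x) * deriv ?f x * inverse (?f x))) (at x)"
    by (intro DERIV_inverse' fL_dx_nonzero[OF x]) (simp add: DERIV_deriv_iff_field_differentiable)
  from DERIV_unique[OF inv_G this]
  have "(\<Sum>s=1..k+m. p s ^ (m + 1) / (of_nat k * D s * (x - p s) ^ 2))
      = inverse (?f x) * deriv ?f x * inverse (?f x)"
    by (simp add: sum_negf)
  also have "\<dots> = deriv ?f x / (?f x) ^ 2"
    by (simp add: power2_eq_square divide_inverse mult_ac)
  finally show ?thesis .
qed

end

section \<open>The family \<open>f\<^sub>\<tau>\<close> near a point \<open>\<tau>\<^sub>0\<close>\<close>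

lemma center_in_polydisc: "r > 0 \<Longrightarrow> c \<in> polydisc N c r"
  by (simp add: polydisc_def)

lemma fun_upd_in_polydisc: "cmod (w - c j) < r \<Longrightarrow> c(j := w) \<in> polydisc N c r"
  by (auto simp: polydisc_def le_less_trans[OF norm_ge_zero])

locale laurent_family =
  fixes k m :: nat and Q :: complex and T :: "(nat \<Rightarrow> complex) \<Rightarrow> nat \<Rightarrow> complex"
    and tau0 :: "nat \<Rightarrow> complex"
  assumes m_ge_1: "m \<ge> 1"
    and T_differentiable: "\<And>j l. j \<in> {1..k+m} \<Longrightarrow> l \<in> {1..k+m} \<Longrightarrow>
           (\<lambda>w. T (tau0(j := w)) l) field_differentiable at (tau0 j)"
begin

abbreviation f0 :: "complex \<Rightarrow> complex" where
  "f0 \<equiv> fL k m Q (T tau0)"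

abbreviation df0 :: "complex \<Rightarrow> complex" where
  "df0 \<equiv> fL_dx k m Q (T tau0)"

abbreviation eta0 :: "nat \<Rightarrow> nat \<Rightarrow> complex" where
  "eta0 \<equiv> eta (\<lambda>tau x. fL k m Q (T tau) x) tau0"

definition dT :: "nat \<Rightarrow> nat \<Rightarrow> complex" where
  "dT j l = deriv (\<lambda>w. T (tau0(j := w)) l) (tau0 j)"

definition partial_f :: "nat \<Rightarrow> complex \<Rightarrow> complex" where
  "partial_f j = laurent k m (dT j) (fL_inv_coeff_deriv k m Q (T tau0) (dT j))"

lemma partial_f_holomorphic: "partial_f j holomorphic_on - {0}"
  unfolding partial_f_def by (rule laurent_holomorphic)

lemma fL_coordinate_curve_has_field_derivative:
  assumes j: "j \<in> {1..k+m}" and dX: "(X has_field_derivative dX) (at (tau0 j))" and X0: "X (tau0 j) \<noteq> 0"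
  shows "((\<lambda>w. fL k m Q (T (tau0(j := w))) (X w)) has_field_derivative
           partial_f j (X (tau0 j)) + dX * df0 (X (tau0 j))) (at (tau0 j))"
proof -
  have "((\<lambda>w. T (tau0(j := w)) l) has_field_derivative dT j l) (at (tau0 j))" if "l \<in> {1..k+m}" for l
    using T_differentiable[OF j that] by (simp add: dT_def DERIV_deriv_iff_field_differentiable)
  from fL_curve_has_field_derivative[OF m_ge_1 this dX X0] show ?thesis
    by (simp add: partial_f_def)
qed

lemma fL_has_field_derivative: "x \<noteq> 0 \<Longrightarrow> (f0 has_field_derivative df0 x) (at x)"
  using fL_curve_has_field_derivative[OF m_ge_1, where k=k and Q=Q and tt="\<lambda>w. T tau0"
          and dt="\<lambda>l. 0" and X="\<lambda>w. w" and dX=1 and z=x]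
  by (simp add: laurent_def fL_inv_coeff_deriv_def)

lemma deriv_fL: "x \<noteq> 0 \<Longrightarrow> deriv f0 x = df0 x"
  by (rule DERIV_imp_deriv[OF fL_has_field_derivative])

lemma pd_fL: "j \<in> {1..k+m} \<Longrightarrow> x \<noteq> 0 \<Longrightarrow> pd j (\<lambda>z. fL k m Q (T z) x) tau0 = partial_f j x"
  using fL_coordinate_curve_has_field_derivative[of j "\<lambda>w. x" 0]
  unfolding pd_def by (simp add: DERIV_imp_deriv)

lemma one_point_cycle_lambda:
  assumes "one_point_cycle (k + m) (\<lambda>tau x. fL k m Q (T tau) x) tau0 lam0 X"
  shows "X tau0 lam0 \<noteq> 0" and "\<forall>\<^sub>F l in nhds lam0. X tau0 l \<noteq> 0"
    and "X tau0 field_differentiable at lam0"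
    and "df0 (X tau0 lam0) * deriv (X tau0) lam0 = 1"
proof -
  obtain r where r: "r > 0" and X: "holo2 (k + m) (polydisc (k + m) tau0 r) (ball lam0 r) X"
    and sol: "\<forall>z\<in>polydisc (k + m) tau0 r. \<forall>l\<in>ball lam0 r. X z l \<noteq> 0 \<and> fL k m Q (T z) (X z l) = l"
    using assms unfolding one_point_cycle_def by blast
  have tau0: "tau0 \<in> polydisc (k + m) tau0 r" and lam0: "lam0 \<in> ball lam0 r"
    using r by (auto simp: center_in_polydisc)
  show x0: "X tau0 lam0 \<noteq> 0" using sol tau0 lam0 by blast
  show "\<forall>\<^sub>F l in nhds lam0. X tau0 l \<noteq> 0"
    using eventually_nhds_in_open[OF open_ball lam0] by eventually_elim (use sol tau0 in blast)
  show diff: "X tau0 field_differentiable at lam0"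
    using X tau0 lam0 unfolding holo2_def by blast
  have "((\<lambda>l. f0 (X tau0 l)) has_field_derivative df0 (X tau0 lam0) * deriv (X tau0) lam0) (at lam0)"
    using DERIV_chain2[OF fL_has_field_derivative[OF x0] diff[unfolded DERIV_deriv_iff_field_differentiable[symmetric]]] .
  moreover have "((\<lambda>l. f0 (X tau0 l)) has_field_derivative 1) (at lam0)"
    by (rule has_field_derivative_transform_within_open[OF DERIV_ident open_ball lam0]) (use sol tau0 in auto)
  ultimately show "df0 (X tau0 lam0) * deriv (X tau0) lam0 = 1"
    by (rule DERIV_unique)
qed

lemma one_point_cycle_pd:
  assumes "one_point_cycle (k + m) (\<lambda>tau x. fL k m Q (T tau) x) tau0 lam0 X" and j: "j \<in> {1..k+m}"
  shows "pd j (\<lambda>z. X z lam0) tau0 * df0 (X tau0 lam0) = - partial_f j (X tau0 lam0)"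
proof -
  obtain r where r: "r > 0" and X: "holo2 (k + m) (polydisc (k + m) tau0 r) (ball lam0 r) X"
    and sol: "\<forall>z\<in>polydisc (k + m) tau0 r. \<forall>l\<in>ball lam0 r. X z l \<noteq> 0 \<and> fL k m Q (T z) (X z l) = l"
    using assms unfolding one_point_cycle_def by blast
  have tau0: "tau0 \<in> polydisc (k + m) tau0 r" and lam0: "lam0 \<in> ball lam0 r"
    using r by (auto simp: center_in_polydisc)
  have "(\<lambda>w. X (tau0(j := w)) lam0) field_differentiable at (tau0 j)"
    using X tau0 lam0 j unfolding holo2_def by blast
  then have "((\<lambda>w. X (tau0(j := w)) lam0) has_field_derivative pd j (\<lambda>z. X z lam0) tau0) (at (tau0 j))"
    by (simp add: pd_def DERIV_deriv_iff_field_differentiable)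
  from fL_coordinate_curve_has_field_derivative[OF j this]
  have "((\<lambda>w. fL k m Q (T (tau0(j := w))) (X (tau0(j := w)) lam0)) has_field_derivative
          partial_f j (X tau0 lam0) + pd j (\<lambda>z. X z lam0) tau0 * df0 (X tau0 lam0)) (at (tau0 j))"
    using sol tau0 lam0 by simp
  moreover have "((\<lambda>w. fL k m Q (T (tau0(j := w))) (X (tau0(j := w)) lam0)) has_field_derivative 0) (at (tau0 j))"
  proof (rule has_field_derivative_transform_within_open[OF DERIV_const open_ball])
    show "tau0 j \<in> ball (tau0 j) r" using r by simp
  next
    fix w assume "w \<in> ball (tau0 j) r"
    then have "tau0(j := w) \<in> polydisc (k + m) tau0 r"
      by (intro fun_upd_in_polydisc) (simp add: dist_norm norm_minus_commute)
    then show "lam0 = fL k m Q (T (tau0(j := w))) (X (tau0(j := w)) lam0)" using sol lam0 by auto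
  qed
  ultimately show ?thesis
    using DERIV_unique by (metis add_eq_0_iff)
qed

lemma deriv_along_one_point_cycle:
  assumes X: "one_point_cycle (k + m) (\<lambda>tau x. fL k m Q (T tau) x) tau0 lam0 X"
  shows "deriv (\<lambda>l. deriv f0 (X tau0 l)) lam0 = deriv df0 (X tau0 lam0) * deriv (X tau0) lam0"
proof -
  note cycle = one_point_cycle_lambda[OF X]
  have "df0 field_differentiable at (X tau0 lam0)"
    using cycle(1) by (intro holomorphic_on_imp_differentiable_at[OF fL_dx_holomorphic]) auto
  from DERIV_chain2[OF this[unfolded DERIV_deriv_iff_field_differentiable[symmetric]]
                       cycle(3)[unfolded DERIV_deriv_iff_field_differentiable[symmetric]]]
  have "((\<lambda>l. df0 (X tau0 l)) has_field_derivative deriv df0 (X tau0 lam0) * deriv (X tau0) lam0) (at lam0)" .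
  moreover have "\<forall>\<^sub>F l in nhds lam0. deriv f0 (X tau0 l) = df0 (X tau0 l)"
    using cycle(2) by eventually_elim (rule deriv_fL)
  ultimately show ?thesis
    by (intro DERIV_imp_deriv) (simp add: DERIV_cong_ev)
qed

end

locale semisimple_point = laurent_family k m Q T tau0 + critical_points k m Q "T tau0" p
  for k m Q T tau0 p +
  assumes nondegenerate:
    "\<forall>v. (\<forall>s\<in>{1..k+m}. (\<Sum>j=1..k+m. pd j (\<lambda>z. fL k m Q (T z) (p s)) tau0 * v j) = 0)
         \<longrightarrow> (\<forall>j\<in>{1..k+m}. v j = 0)"

text \<open>Semi-simplicity gives the critical points; since \<open>f\<^sub>\<tau>'\<close> vanishes at them,
  \<open>\<partial>\<^sub>j\<close> of a critical value is \<open>\<partial>\<^sub>j f\<close> at the critical point, so the Jacobian of the critical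
  values is the matrix \<open>(\<partial>\<^sub>j f(p\<^sub>s))\<close>.\<close>

lemma (in laurent_family) semisimple_point_exists:
  assumes k: "k \<ge> 1" and ss: "semisimple (k + m) (\<lambda>tau x. fL k m Q (T tau) x) tau0"
  obtains p where "semisimple_point k m Q T tau0 p"
proof -
  obtain r c where r: "r > 0"
    and c_holo: "\<forall>i\<in>{1..k+m}. holo (k + m) (polydisc (k + m) tau0 r) (c i)"
    and c_crit: "\<forall>z\<in>polydisc (k + m) tau0 r. \<forall>i\<in>{1..k+m}.
                   c i z \<noteq> 0 \<and> deriv (fL k m Q (T z)) (c i z) = 0 \<and> deriv (deriv (fL k m Q (T z))) (c i z) \<noteq> 0"
    and c_inj: "\<forall>z\<in>polydisc (k + m) tau0 r. inj_on (\<lambda>i. c i z) {1..k+m}"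
    and jacobian: "\<forall>v. (\<forall>i\<in>{1..k+m}. (\<Sum>j=1..k+m. pd j (\<lambda>z. fL k m Q (T z) (c i z)) tau0 * v j) = 0)
                      \<longrightarrow> (\<forall>j\<in>{1..k+m}. v j = 0)"
    using ss unfolding semisimple_def by blast
  define p where "p i = c i tau0" for i
  have tau0: "tau0 \<in> polydisc (k + m) tau0 r" using r by (rule center_in_polydisc)
  have crit: "\<forall>s\<in>{1..k+m}. df0 (p s) = 0 \<and> p s \<noteq> 0"
  proof
    fix s assume "s \<in> {1..k+m}"
    then have "p s \<noteq> 0" "deriv f0 (p s) = 0" using c_crit tau0 by (auto simp: p_def)
    then show "df0 (p s) = 0 \<and> p s \<noteq> 0" using deriv_fL by simp
  qed
  have inj: "inj_on p {1..k+m}"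
    using c_inj tau0 by (simp add: p_def[abs_def])
  have pd_eq: "pd j (\<lambda>z. fL k m Q (T z) (c s z)) tau0 = pd j (\<lambda>z. fL k m Q (T z) (p s)) tau0"
    if s: "s \<in> {1..k+m}" and j: "j \<in> {1..k+m}" for s j
  proof -
    have "(\<lambda>w. c s (tau0(j := w))) field_differentiable at (tau0 j)"
      using c_holo s j tau0 unfolding holo_def by blast
    then obtain dc where "((\<lambda>w. c s (tau0(j := w))) has_field_derivative dc) (at (tau0 j))"
      unfolding field_differentiable_def by blast
    from fL_coordinate_curve_has_field_derivative[OF j this]
    have "((\<lambda>w. fL k m Q (T (tau0(j := w))) (c s (tau0(j := w)))) has_field_derivative partial_f j (p s))
            (at (tau0 j))"
      using crit s by (simp add: p_def)
    then show ?thesis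
      using pd_fL[OF j] crit s unfolding pd_def by (simp add: DERIV_imp_deriv)
  qed
  have "(\<Sum>j=1..k+m. pd j (\<lambda>z. fL k m Q (T z) (c s z)) tau0 * v j)
      = (\<Sum>j=1..k+m. pd j (\<lambda>z. fL k m Q (T z) (p s)) tau0 * v j)" if "s \<in> {1..k+m}" for s v
    by (rule sum.cong[OF refl]) (simp only: pd_eq[OF that])
  then have "semisimple_point k m Q T tau0 p"
    using jacobian k m_ge_1 inj crit
    by (intro semisimple_point.intro laurent_family_axioms critical_points.intro semisimple_point_axioms.intro)
       auto
  then show thesis by (rule that)
qed

context semisimple_point
begin

lemma nondegenerate_partial_f:
  "\<forall>v. (\<forall>s\<in>{1..k+m}. (\<Sum>j=1..k+m. partial_f j (p s) * v j) = 0) \<longrightarrow> (\<forall>j\<in>{1..k+m}. v j = 0)"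
proof -
  have "(\<Sum>j=1..k+m. pd j (\<lambda>z. fL k m Q (T z) (p s)) tau0 * v j) = (\<Sum>j=1..k+m. partial_f j (p s) * v j)"
    if "s \<in> {1..k+m}" for s v
    using that critical by (intro sum.cong refl) (simp add: pd_fL)
  then show ?thesis using nondegenerate by simp
qed

lemma eta0_eq_critical_sum:
  assumes "i \<in> {1..k+m}" and "j \<in> {1..k+m}"
  shows "eta0 i j = (\<Sum>s=1..k+m. partial_f i (p s) * partial_f j (p s) * W s)"
  unfolding eta_def
  by (rule res_pair_eq_critical_sum[OF partial_f_holomorphic partial_f_holomorphic])
     (use assms in \<open>auto simp: pd_fL deriv_fL\<close>)

lemma dual_vector_values:
  assumes x: "x \<notin> poles"
    and I: "\<forall>j\<in>{1..k+m}. (\<Sum>i=1..k+m. I i * eta0 i j) = partial_f j x / (x * df0 x)"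
  shows "\<forall>s\<in>{1..k+m}. (\<Sum>i=1..k+m. I i * partial_f i (p s)) = p s / (x - p s)"
proof -
  define \<beta> where "\<beta> s = p s ^ m / (of_nat k * D s * (x - p s))" for s
  define y where "y s = W s * (\<Sum>i=1..k+m. I i * partial_f i (p s)) - \<beta> s" for s
  have "\<forall>j\<in>{1..k+m}. (\<Sum>s=1..k+m. y s * partial_f j (p s)) = 0"
  proof
    fix j assume j: "j \<in> {1..k+m}"
    have "(\<Sum>s=1..k+m. W s * (\<Sum>i=1..k+m. I i * partial_f i (p s)) * partial_f j (p s))
        = (\<Sum>s=1..k+m. \<Sum>i=1..k+m. I i * (partial_f i (p s) * partial_f j (p s) * W s))"
      by (simp add: sum_distrib_left sum_distrib_right mult_ac)
    also have "\<dots> = (\<Sum>i=1..k+m. \<Sum>s=1..k+m. I i * (partial_f i (p s) * partial_f j (p s) * W s))"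
      by (rule sum.swap)
    also have "\<dots> = (\<Sum>i=1..k+m. I i * eta0 i j)"
      using j by (intro sum.cong refl) (simp add: eta0_eq_critical_sum sum_distrib_left)
    finally have "(\<Sum>s=1..k+m. W s * (\<Sum>i=1..k+m. I i * partial_f i (p s)) * partial_f j (p s))
                = partial_f j x / (x * df0 x)"
      using I j by simp
    moreover have "partial_f j x / (x * df0 x) = (\<Sum>s=1..k+m. \<beta> s * partial_f j (p s))"
      unfolding partial_f_def \<beta>_def by (rule laurent_partial_fractions[OF x])
    ultimately show "(\<Sum>s=1..k+m. y s * partial_f j (p s)) = 0"
      by (simp add: y_def left_diff_distrib sum_subtractf)
  qed
  from transpose_injective[OF nondegenerate_partial_f this]
  have y0: "\<forall>s\<in>{1..k+m}. y s = 0" .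
  show ?thesis
  proof
    fix s assume s: "s \<in> {1..k+m}"
    have "p s \<noteq> 0" "of_nat k * D s \<noteq> 0"
      using critical s D_nonzero[OF s] k_ge_1 by auto
    have cancel: "(P * q / (E * a)) / (P / E) = q / a" if "P \<noteq> 0" "E \<noteq> 0" for P E q a :: complex
      using that by (cases "a = 0") (simp_all add: field_simps)
    have pm: "p s ^ m = p s ^ (m - 1) * p s" using m_ge_1 by (cases m) auto
    have ratio: "\<beta> s / W s = p s / (x - p s)"
      unfolding \<beta>_def W_def pm by (rule cancel) (use \<open>p s \<noteq> 0\<close> \<open>of_nat k * D s \<noteq> 0\<close> in simp_all)
    have W: "W s \<noteq> 0" using \<open>p s \<noteq> 0\<close> \<open>of_nat k * D s \<noteq> 0\<close> by (simp add: W_def)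
    have "(\<Sum>i=1..k+m. I i * partial_f i (p s)) * W s = \<beta> s"
      using y0 s by (simp add: y_def mult.commute)
    then have "(\<Sum>i=1..k+m. I i * partial_f i (p s)) = \<beta> s / W s"
      by (simp add: nonzero_eq_divide_eq[OF W])
    then show "(\<Sum>i=1..k+m. I i * partial_f i (p s)) = p s / (x - p s)"
      by (simp only: ratio)
  qed
qed

lemma pairing_dual_vectors:
  assumes I: "\<forall>s\<in>{1..k+m}. (\<Sum>i=1..k+m. I i * partial_f i (p s)) = p s / (x - p s)"
    and J: "\<forall>s\<in>{1..k+m}. (\<Sum>j=1..k+m. J j * partial_f j (p s)) = p s / (y - p s)"
  shows "(\<Sum>i=1..k+m. \<Sum>j=1..k+m. I i * J j * eta0 i j)
       = (\<Sum>s=1..k+m. p s ^ (m + 1) / (of_nat k * D s * (x - p s) * (y - p s)))"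
proof -
  let ?A = "{1..k+m}"
  have "(\<Sum>i\<in>?A. \<Sum>j\<in>?A. I i * J j * eta0 i j)
      = (\<Sum>i\<in>?A. \<Sum>j\<in>?A. \<Sum>s\<in>?A. I i * J j * (partial_f i (p s) * partial_f j (p s) * W s))"
    by (intro sum.cong refl) (simp add: eta0_eq_critical_sum sum_distrib_left)
  also have "\<dots> = (\<Sum>i\<in>?A. \<Sum>s\<in>?A. \<Sum>j\<in>?A. I i * J j * (partial_f i (p s) * partial_f j (p s) * W s))"
    by (intro sum.cong refl sum.swap)
  also have "\<dots> = (\<Sum>s\<in>?A. \<Sum>i\<in>?A. \<Sum>j\<in>?A. I i * J j * (partial_f i (p s) * partial_f j (p s) * W s))"
    by (rule sum.swap)
  also have "\<dots> = (\<Sum>s\<in>?A. W s * (\<Sum>i\<in>?A. I i * partial_f i (p s)) * (\<Sum>j\<in>?A. J j * partial_f j (p s)))"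
    by (intro sum.cong refl) (simp add: sum_distrib_left sum_distrib_right mult_ac)
  also have "\<dots> = (\<Sum>s\<in>?A. W s * (p s / (x - p s)) * (p s / (y - p s)))"
    using I J by (intro sum.cong refl) simp
  also have "\<dots> = (\<Sum>s\<in>?A. p s ^ (m + 1) / (of_nat k * D s * (x - p s) * (y - p s)))"
  proof (rule sum.cong[OF refl])
    fix s
    have "p s ^ (m + 1) = p s ^ (m - 1) * p s * p s"
      using m_ge_1 by (simp add: power_Suc2[symmetric] mult.assoc)
    then show "W s * (p s / (x - p s)) * (p s / (y - p s))
             = p s ^ (m + 1) / (of_nat k * D s * (x - p s) * (y - p s))"
      by (simp only: W_def times_divide_times_eq)
  qed
  finally show ?thesis .
qed

lemma one_point_cycle_dual_vector:
  assumes X: "one_point_cycle (k + m) (\<lambda>tau x. fL k m Q (T tau) x) tau0 lam0 X"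
    and I: "\<forall>j\<in>{1..k+m}. (\<Sum>i=1..k+m. I i * eta0 i j) = - pd j (\<lambda>z. X z lam0) tau0 / X tau0 lam0"
  shows "X tau0 lam0 \<notin> poles" and "deriv (X tau0) lam0 = 1 / df0 (X tau0 lam0)"
    and "\<forall>s\<in>{1..k+m}. (\<Sum>i=1..k+m. I i * partial_f i (p s)) = p s / (X tau0 lam0 - p s)"
proof -
  let ?x = "X tau0 lam0"
  note cycle = one_point_cycle_lambda[OF X]
  have df0: "df0 ?x \<noteq> 0" using cycle(4) by auto
  show x: "?x \<notin> poles" by (rule notin_poles[OF cycle(1) df0])
  show "deriv (X tau0) lam0 = 1 / df0 ?x" using cycle(4) df0 by (simp add: field_simps)
  have "\<forall>j\<in>{1..k+m}. (\<Sum>i=1..k+m. I i * eta0 i j) = partial_f j ?x / (?x * df0 ?x)"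
  proof
    fix j assume j: "j \<in> {1..k+m}"
    have "pd j (\<lambda>z. X z lam0) tau0 = - (partial_f j ?x / df0 ?x)"
      using one_point_cycle_pd[OF X j] df0 by (simp add: field_simps)
    then have "- pd j (\<lambda>z. X z lam0) tau0 / ?x = partial_f j ?x / (?x * df0 ?x)"
      by (simp add: mult.commute)
    with I j show "(\<Sum>i=1..k+m. I i * eta0 i j) = partial_f j ?x / (?x * df0 ?x)"
      by simp
  qed
  then show "\<forall>s\<in>{1..k+m}. (\<Sum>i=1..k+m. I i * partial_f i (p s)) = p s / (?x - p s)"
    by (rule dual_vector_values[OF x])
qed

lemma pairing_one_point_cycles:
  assumes Xa: "one_point_cycle (k + m) (\<lambda>tau x. fL k m Q (T tau) x) tau0 lam0 Xa"
    and Xb: "one_point_cycle (k + m) (\<lambda>tau x. fL k m Q (T tau) x) tau0 lam0 Xb"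
    and Ia: "\<forall>j\<in>{1..k+m}. (\<Sum>i=1..k+m. Ia i * eta0 i j) = - pd j (\<lambda>z. Xa z lam0) tau0 / Xa tau0 lam0"
    and Ib: "\<forall>j\<in>{1..k+m}. (\<Sum>i=1..k+m. Ib i * eta0 i j) = - pd j (\<lambda>z. Xb z lam0) tau0 / Xb tau0 lam0"
    and ne: "Xa tau0 lam0 \<noteq> Xb tau0 lam0"
  shows "(\<Sum>i=1..k+m. \<Sum>j=1..k+m. Ia i * Ib j * eta0 i j)
       = - (deriv (Xa tau0) lam0 - deriv (Xb tau0) lam0) / (Xa tau0 lam0 - Xb tau0 lam0)"
  using pairing_dual_vectors[OF one_point_cycle_dual_vector(3)[OF Xa Ia] one_point_cycle_dual_vector(3)[OF Xb Ib]]
    critical_sum_two_points[OF one_point_cycle_dual_vector(1)[OF Xa Ia] one_point_cycle_dual_vector(1)[OF Xb Ib] ne]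
    one_point_cycle_dual_vector(2)[OF Xa Ia] one_point_cycle_dual_vector(2)[OF Xb Ib]
  by simp

text \<open>By the chain rule and \<open>\<partial>\<^sub>\<lambda>x\<^sub>a = 1/f'(x\<^sub>a)\<close>, both sides equal
  \<open>f''(x\<^sub>a)/f'(x\<^sub>a)\<^sup>2 = -(1/f')'(x\<^sub>a)\<close>.\<close>

lemma pairing_one_point_cycle_self:
  assumes X: "one_point_cycle (k + m) (\<lambda>tau x. fL k m Q (T tau) x) tau0 lam0 X"
    and I: "\<forall>j\<in>{1..k+m}. (\<Sum>i=1..k+m. I i * eta0 i j) = - pd j (\<lambda>z. X z lam0) tau0 / X tau0 lam0"
  shows "(\<Sum>i=1..k+m. \<Sum>j=1..k+m. I i * I j * eta0 i j)
       = deriv (\<lambda>l. deriv f0 (X tau0 l)) lam0 / deriv f0 (X tau0 lam0)"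
proof -
  let ?x = "X tau0 lam0"
  note dual = one_point_cycle_dual_vector[OF X I]
  have "?x \<noteq> 0" using dual(1) by auto
  then have "deriv (\<lambda>l. deriv f0 (X tau0 l)) lam0 / deriv f0 ?x = deriv df0 ?x / (df0 ?x)\<^sup>2"
    using deriv_along_one_point_cycle[OF X] dual(2) by (simp add: deriv_fL power2_eq_square)
  also have "\<dots> = (\<Sum>s=1..k+m. p s ^ (m + 1) / (of_nat k * D s * (?x - p s) * (?x - p s)))"
    using critical_sum_double_point[OF dual(1)] by (simp add: power2_eq_square mult.assoc)
  also have "\<dots> = (\<Sum>i=1..k+m. \<Sum>j=1..k+m. I i * I j * eta0 i j)"
    by (rule pairing_dual_vectors[OF dual(3) dual(3), symmetric])
  finally show ?thesis ..
qed

end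

theorem mainTheorem12:
  fixes k m :: nat and Q :: complex and r :: real
    and T :: "(nat \<Rightarrow> complex) \<Rightarrow> (nat \<Rightarrow> complex)"
    and tau0 :: "nat \<Rightarrow> complex" and lam0 :: complex
    and xa xb :: "(nat \<Rightarrow> complex) \<Rightarrow> complex \<Rightarrow> complex"
    and Ia Ib :: "nat \<Rightarrow> complex"
  defines "N \<equiv> k + m"
    and "F \<equiv> (\<lambda>tau x. fL k m Q (T tau) x)"
  assumes "k \<ge> 1" and "m \<ge> 1" and "Q \<noteq> 0" and "r > 0"
    and T_holo: "\<forall>l\<in>{1..N}. holo N (polydisc N tau0 r) (\<lambda>tau. T tau l)"
    and T_inv: "\<forall>tau\<in>polydisc N tau0 r. \<forall>i\<in>{1..N}. flat k m Q (T tau) i = tau i"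
    and ss: "semisimple N F tau0"
    and xa: "one_point_cycle N F tau0 lam0 xa"
    and xb: "one_point_cycle N F tau0 lam0 xb"
    and Ia: "\<forall>j\<in>{1..N}. (\<Sum>i = 1..N. Ia i * eta F tau0 i j) = - pd j (\<lambda>z. xa z lam0) tau0 / xa tau0 lam0"
    and Ib: "\<forall>j\<in>{1..N}. (\<Sum>i = 1..N. Ib i * eta F tau0 i j) = - pd j (\<lambda>z. xb z lam0) tau0 / xb tau0 lam0"
  shows "(xa tau0 lam0 \<noteq> xb tau0 lam0 \<longrightarrow>
            (\<Sum>i = 1..N. \<Sum>j = 1..N. Ia i * Ib j * eta F tau0 i j)
              = - (deriv (xa tau0) lam0 - deriv (xb tau0) lam0) / (xa tau0 lam0 - xb tau0 lam0))
       \<and> (\<Sum>i = 1..N. \<Sum>j = 1..N. Ia i * Ia j * eta F tau0 i j)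
              = deriv (\<lambda>l. deriv (F tau0) (xa tau0 l)) lam0 / deriv (F tau0) (xa tau0 lam0)"
proof -
  interpret laurent_family k m Q T tau0
  proof unfold_locales
    fix j l assume j: "j \<in> {1..k+m}" and l: "l \<in> {1..k+m}"
    have "holo (k + m) (polydisc (k + m) tau0 r) (\<lambda>tau. T tau l)"
      using T_holo l unfolding N_def by blast
    then show "(\<lambda>w. T (tau0(j := w)) l) field_differentiable at (tau0 j)"
      using center_in_polydisc[OF \<open>r > 0\<close>] j unfolding holo_def by blast
  qed fact
  obtain p where "semisimple_point k m Q T tau0 p"
    by (rule semisimple_point_exists[OF \<open>k \<ge> 1\<close> ss[unfolded F_def N_def]])
  then interpret semisimple_point k m Q T tau0 p .
  note cycles = xa[unfolded F_def N_def] xb[unfolded F_def N_def]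
    Ia[unfolded F_def N_def] Ib[unfolded F_def N_def]
  show ?thesis
    unfolding F_def N_def
  proof (intro conjI impI)
    assume "xa tau0 lam0 \<noteq> xb tau0 lam0"
    with cycles show "(\<Sum>i=1..k+m. \<Sum>j=1..k+m. Ia i * Ib j * eta0 i j)
        = - (deriv (xa tau0) lam0 - deriv (xb tau0) lam0) / (xa tau0 lam0 - xb tau0 lam0)"
      by (rule pairing_one_point_cycles)
  next
    show "(\<Sum>i=1..k+m. \<Sum>j=1..k+m. Ia i * Ia j * eta0 i j)
        = deriv (\<lambda>l. deriv f0 (xa tau0 l)) lam0 / deriv f0 (xa tau0 lam0)"
      by (rule pairing_one_point_cycle_self[OF cycles(1,3)])
  qed
qed

end
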